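(* Let $\mathbf A\in\mathbb R^{m\times n}$ and integers $0\le s<k<n$, and let $\lambda_1\ge\dots\ge\lambda_n>0$ be the eigenvalues of $\mathbf A^\top\mathbf A$. Let $S\sim k\text{-}\mathrm{DPP}(\mathbf A^\top\mathbf A)$ and $b=\min\{k-s,n-k\}$. Then for any $0<\epsilon\le\frac12$, \[ \frac{\mathbb E[\mathrm{Er}_{\mathbf A}(S)]}{\mathrm{OPT}_k}\le\big(1-e^{-\epsilon^2b/10}\big)^{-1}(1-\epsilon)^{-1}\,\Psi_s(k),\qquad\text{where }\Psi_s(k)=\frac{\lambda_{s+1}}{\lambda_n}\Big(1+\frac{s}{k-s}\Big). \]
   Context: For $\mathbf A\in\mathbb R^{m\times n}$ with columns $\mathbf a_1,\dots,\mathbf a_n$ and $S\subseteq\{1,\dots,n\}$, $\mathbf P_S$ is the orthogonal projection onto $\mathrm{span}\{\mathbf a_i:i\in S\}$, $\mathrm{Er}_{\mathbf A}(S)=\|\mathbf A-\mathbf P_S\mathbf A\|_F^2$, and $\mathrm{OPT}_k=\min_{\mathrm{rank}(\mathbf B)=k}\|\mathbf A-\mathbf B\|_F^2=\sum_{i>k}\lambda_i$. $S\sim k\text{-}\mathrm{DPP}(\mathbf A^\top\mathbf A)$ denotes the distribution over subsets $S$ with $|S|=k$ and $\Pr(S)\propto\det(\mathbf A_S^\top\mathbf A_S)$, $\mathbf A_S$ the submatrix of columns indexed by $S$. *)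

theory Defs
  imports "HOL-Analysis.Analysis"
begin

text \<open>Matrices A in R^{m x n} are modelled as real^'n^'m (m rows, n = CARD('n) columns);
column indices are elements of the finite type 'n.\<close>

definition eigs :: "real^'n^'n \<Rightarrow> real list" where
  "eigs M = (THE ls. length ls = CARD('n) \<and> sorted_wrt (\<ge>) ls \<and>
      (\<forall>x. det (mat x - M) = (\<Prod>i<CARD('n). x - ls ! i)))"

definition lam :: "real^'n^'m \<Rightarrow> nat \<Rightarrow> real" where
  "lam A i = eigs (transpose A ** A) ! (i - 1)"

definition frob2 :: "real^'n^'m \<Rightarrow> real" where
  "frob2 B = (\<Sum>i\<in>UNIV. \<Sum>j\<in>UNIV. (B $ i $ j)^2)"

definition projS :: "real^'n^'m \<Rightarrow> 'n set \<Rightarrow> real^'m \<Rightarrow> real^'m" where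
  "projS A S v = closest_point (span ((\<lambda>i. column i A) ` S)) v"

definition Er :: "real^'n^'m \<Rightarrow> 'n set \<Rightarrow> real" where
  "Er A S = frob2 (A - (\<chi> i j. projS A S (column j A) $ i))"

definition OPT :: "real^'n^'m \<Rightarrow> nat \<Rightarrow> real" where
  "OPT A k = Inf {frob2 (A - B) | B. rank B = k}"

text \<open>det(A_S^T A_S), Leibniz formula over the index set S.\<close>
definition gram_det :: "real^'n^'m \<Rightarrow> 'n set \<Rightarrow> real" where
  "gram_det A S = (\<Sum>p\<in>{p. p permutes S}. of_int (sign p) *
      (\<Prod>i\<in>S. column i A \<bullet> column (p i) A))"

text \<open>E[Er_A(S)] for S ~ k-DPP(A^T A): Pr(S) = det(A_S^T A_S) / sum_{|T|=k} det(A_T^T A_T).\<close>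
definition dpp_expected_Er :: "real^'n^'m \<Rightarrow> nat \<Rightarrow> real" where
  "dpp_expected_Er A k =
     (\<Sum>S\<in>{S. card S = k}. gram_det A S * Er A S) / (\<Sum>T\<in>{T. card T = k}. gram_det A T)"

end

theory Submission
  imports Defs "HOL-Computational_Algebra.Fundamental_Theorem_Algebra"
begin

text \<open>Let \<open>e\<^sub>j\<close> be the \<open>j\<close>-th elementary symmetric polynomial of the eigenvalues
  \<open>\<lambda>\<^sub>1 \<ge> \<dots> \<ge> \<lambda>\<^sub>n\<close> of \<open>A\<^sup>T A\<close>; comparing coefficients of the characteristic polynomial, it
  is the sum of all \<open>j \<times> j\<close> principal minors, i.e. of the Gram determinants \<open>det (A\<^sub>S\<^sup>T A\<^sub>S)\<close>
  with \<open>|S| = j\<close>. By the base-times-height formula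
  \<open>det (A\<^sub>S\<^sub>+\<^sub>j\<^sup>T A\<^sub>S\<^sub>+\<^sub>j) = det (A\<^sub>S\<^sup>T A\<^sub>S) \<parallel>a\<^sub>j - P\<^sub>S a\<^sub>j\<parallel>\<^sup>2\<close>, summing over the pairs \<open>(S, j)\<close>
  gives \<open>E[Er\<^sub>A(S)] = (k + 1) e\<^sub>k\<^sub>+\<^sub>1 / e\<^sub>k\<close>. Counting the same pairs once more yields
  \<open>(k + 1 - s) e\<^sub>k\<^sub>+\<^sub>1 \<le> (n - k) \<lambda>\<^sub>s\<^sub>+\<^sub>1 e\<^sub>k\<close>. On the other hand, every rank-\<open>k\<close> matrix vanishes
  on \<open>n - k\<close> orthonormal vectors, on each of which \<open>\<parallel>A x\<parallel>\<^sup>2 \<ge> \<lambda>\<^sub>n\<close>, so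
  \<open>OPT\<^sub>k \<ge> (n - k) \<lambda>\<^sub>n\<close>. Hence the ratio is at most
  \<open>(k + 1) / (k + 1 - s) \<lambda>\<^sub>s\<^sub>+\<^sub>1 / \<lambda>\<^sub>n \<le> \<Psi>\<^sub>s(k)\<close>, and the two remaining factors are \<open>\<ge> 1\<close>.\<close>

section \<open>Principal minors and the characteristic polynomial\<close>

definition principal_minor :: "'a::comm_ring_1^'n^'n \<Rightarrow> 'n set \<Rightarrow> 'a" where
  "principal_minor M S = (\<Sum>p\<in>{p. p permutes S}. of_int (sign p) * (\<Prod>i\<in>S. M $ i $ p i))"

definition sum_principal_minors :: "'a::comm_ring_1^'n^'n \<Rightarrow> nat \<Rightarrow> 'a" where
  "sum_principal_minors M j = (\<Sum>S\<in>{S. card S = j}. principal_minor M S)"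

definition esym :: "'a::comm_semiring_1 list \<Rightarrow> nat \<Rightarrow> 'a" where
  "esym l j = (\<Sum>T\<in>{T. T \<subseteq> {..<length l} \<and> card T = j}. \<Prod>i\<in>T. l ! i)"

lemma sum_principal_minors_0:
  fixes M :: "'a::comm_ring_1^'n^'n"
  shows "sum_principal_minors M 0 = 1"
proof -
  have "{S::'n set. card S = 0} = {{}}" by auto
  moreover have "{p. p permutes {}} = {id}" by auto
  ultimately show ?thesis
    unfolding sum_principal_minors_def principal_minor_def by simp
qed

lemma permutes_UNIV_fixing_iff: "p permutes UNIV \<and> (\<forall>i\<in>X. p i = i) \<longleftrightarrow> p permutes - X"
  unfolding permutes_def by auto

lemma sum_Pow_by_card:
  fixes g :: "nat \<Rightarrow> 'a::comm_semiring_1"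
  assumes U: "finite U"
  shows "(\<Sum>X\<in>Pow U. g (card X) * h (U - X)) =
         (\<Sum>i\<le>card U. g i * (\<Sum>T\<in>{T. T \<subseteq> U \<and> card T = card U - i}. h T))"
proof -
  have "(\<Sum>X\<in>Pow U. g (card X) * h (U - X)) =
        (\<Sum>X\<in>Pow U. \<Sum>i\<le>card U. if i = card X then g i * h (U - X) else 0)"
    using U by (intro sum.cong refl) (auto simp: card_mono)
  also have "\<dots> = (\<Sum>i\<le>card U. \<Sum>X\<in>{X. X \<subseteq> U \<and> card X = i}. g i * h (U - X))"
    using U by (subst sum.swap) (auto intro!: sum.cong simp flip: sum.inter_filter)
  also have "\<dots> = (\<Sum>i\<le>card U. g i * (\<Sum>T\<in>{T. T \<subseteq> U \<and> card T = card U - i}. h T))"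
  proof (intro sum.cong refl)
    fix i assume i: "i \<in> {..card U}"
    have "(\<Sum>X\<in>{X. X \<subseteq> U \<and> card X = i}. h (U - X)) =
          (\<Sum>T\<in>{T. T \<subseteq> U \<and> card T = card U - i}. h T)"
    proof (rule sum.reindex_bij_witness[of _ "\<lambda>T. U - T" "\<lambda>X. U - X"])
      fix T assume "T \<in> {T. T \<subseteq> U \<and> card T = card U - i}"
      then show "U - (U - T) = T" and "U - T \<in> {X. X \<subseteq> U \<and> card X = i}"
        using i U by (auto simp: card_Diff_subset finite_subset)
    next
      fix X assume "X \<in> {X. X \<subseteq> U \<and> card X = i}"
      then show "U - (U - X) = X" and "U - X \<in> {T. T \<subseteq> U \<and> card T = card U - i}"
        using U by (auto simp: card_Diff_subset finite_subset)
    qed simp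
    then show "(\<Sum>X\<in>{X. X \<subseteq> U \<and> card X = i}. g i * h (U - X)) =
          g i * (\<Sum>T\<in>{T. T \<subseteq> U \<and> card T = card U - i}. h T)"
      by (simp flip: sum_distrib_left)
  qed
  finally show ?thesis .
qed

lemma det_charmat_Pow:
  fixes M :: "'a::comm_ring_1^'n^'n"
  shows "det (mat x - M) = (\<Sum>X\<in>Pow UNIV. x ^ card X * (-1) ^ card (- X) * principal_minor M (- X))"
proof -
  have entry: "(mat x - M) $ i $ p i = (if p i = i then x else 0) + (- M $ i $ p i)" for i p
    by (auto simp: mat_def)
  have diag: "(\<Prod>i\<in>X. if p i = i then x else 0) = (if \<forall>i\<in>X. p i = i then x ^ card X else 0)"
    for X and p :: "'n \<Rightarrow> 'n"
    by (induction X rule: infinite_finite_induct) auto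
  have "det (mat x - M) = (\<Sum>p\<in>{p. p permutes UNIV}. of_int (sign p) *
      (\<Sum>X\<in>Pow UNIV. (\<Prod>i\<in>X. if p i = i then x else 0) * (\<Prod>i\<in>- X. - M $ i $ p i)))"
    unfolding det_def entry prod_add[OF finite] Compl_eq_Diff_UNIV ..
  also have "\<dots> = (\<Sum>X\<in>Pow UNIV. \<Sum>p\<in>{p. p permutes UNIV}.
      if \<forall>i\<in>X. p i = i then x ^ card X * (-1) ^ card (- X) * (of_int (sign p) * (\<Prod>i\<in>- X. M $ i $ p i)) else 0)"
    by (subst sum.swap) (auto simp: sum_distrib_left diag prod_uminus intro!: sum.cong)
  also have "\<dots> = (\<Sum>X\<in>Pow UNIV. x ^ card X * (-1) ^ card (- X) * principal_minor M (- X))"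
    unfolding principal_minor_def permutes_UNIV_fixing_iff[symmetric]
    by (intro sum.cong refl)
       (auto simp: sum_distrib_left simp flip: sum.inter_filter intro!: sum.cong)
  finally show ?thesis .
qed

lemma det_charmat_coeffs:
  fixes M :: "'a::comm_ring_1^'n^'n"
  shows "det (mat x - M) =
    (\<Sum>i\<le>CARD('n). (-1) ^ (CARD('n) - i) * sum_principal_minors M (CARD('n) - i) * x ^ i)"
proof -
  have "det (mat x - M) =
      (\<Sum>X\<in>Pow UNIV. (x ^ card X * (-1) ^ (CARD('n) - card X)) * principal_minor M (UNIV - X))"
    unfolding det_charmat_Pow
    by (intro sum.cong refl) (simp add: Compl_eq_Diff_UNIV card_Diff_subset)
  also have "\<dots> = (\<Sum>i\<le>CARD('n). (x ^ i * (-1) ^ (CARD('n) - i)) *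
      (\<Sum>T\<in>{T. T \<subseteq> UNIV \<and> card T = CARD('n) - i}. principal_minor M T))"
    by (rule sum_Pow_by_card[where g = "\<lambda>i. x ^ i * (-1) ^ (CARD('n) - i)", OF finite, simplified])
  also have "\<dots> = (\<Sum>i\<le>CARD('n). (-1) ^ (CARD('n) - i) * sum_principal_minors M (CARD('n) - i) * x ^ i)"
    by (simp add: sum_principal_minors_def mult_ac)
  finally show ?thesis .
qed

lemma prod_diff_coeffs:
  fixes l :: "'a::comm_ring_1 list"
  shows "(\<Prod>i<length l. x - l ! i) =
    (\<Sum>i\<le>length l. (-1) ^ (length l - i) * esym l (length l - i) * x ^ i)"
proof -
  have "(\<Prod>i<length l. x - l ! i) = (\<Sum>X\<in>Pow {..<length l}. (\<Prod>i\<in>X. x) * (\<Prod>i\<in>{..<length l} - X. - l ! i))"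
    using prod_add[of "{..<length l}" "\<lambda>_. x" "\<lambda>i. - l ! i"] by simp
  also have "\<dots> = (\<Sum>X\<in>Pow {..<length l}.
      (x ^ card X * (-1) ^ (length l - card X)) * (\<Prod>i\<in>{..<length l} - X. l ! i))"
    by (intro sum.cong refl) (auto simp: prod_uminus card_Diff_subset finite_subset)
  also have "\<dots> = (\<Sum>i\<le>length l. (x ^ i * (-1) ^ (length l - i)) *
      (\<Sum>T\<in>{T. T \<subseteq> {..<length l} \<and> card T = length l - i}. \<Prod>i\<in>T. l ! i))"
    using sum_Pow_by_card[of "{..<length l}" "\<lambda>i. x ^ i * (-1) ^ (length l - i)" "\<lambda>T. \<Prod>i\<in>T. l ! i"]
    by simp
  also have "\<dots> = (\<Sum>i\<le>length l. (-1) ^ (length l - i) * esym l (length l - i) * x ^ i)"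
    by (simp add: esym_def mult_ac)
  finally show ?thesis .
qed

lemma sum_principal_minors_eq_esym:
  fixes M :: "real^'n^'n"
  assumes len: "length l = CARD('n)" and charpoly: "\<And>x. det (mat x - M) = (\<Prod>i<CARD('n). x - l ! i)"
    and j: "j \<le> CARD('n)"
  shows "sum_principal_minors M j = esym l j"
proof -
  have "\<forall>x. (\<Sum>i\<le>CARD('n). (-1) ^ (CARD('n) - i) * sum_principal_minors M (CARD('n) - i) * x ^ i) =
            (\<Sum>i\<le>CARD('n). (-1) ^ (CARD('n) - i) * esym l (CARD('n) - i) * x ^ i)"
    using charpoly prod_diff_coeffs[of _ l] len by (simp add: det_charmat_coeffs)
  then have "\<forall>i\<le>CARD('n). (-1) ^ (CARD('n) - i) * sum_principal_minors M (CARD('n) - i) =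
      (-1) ^ (CARD('n) - i) * esym l (CARD('n) - i)"
    by (subst (asm) polyfun_eq_coeffs)
  from this[rule_format, of "CARD('n) - j"] j show ?thesis by simp
qed

section \<open>Eigenvalues of a real symmetric matrix\<close>

definition of_real_matrix :: "real^'n^'m \<Rightarrow> 'a::real_algebra_1^'n^'m" where
  "of_real_matrix M = (\<chi> i j. of_real (M $ i $ j))"

lemma principal_minor_of_real_matrix:
  "principal_minor (of_real_matrix M :: 'a::{real_algebra_1,comm_ring_1}^'n^'n) S =
   of_real (principal_minor M S)"
  unfolding principal_minor_def of_real_matrix_def by (simp add: of_real_prod)

lemma sum_principal_minors_of_real_matrix:
  "sum_principal_minors (of_real_matrix M :: 'a::{real_algebra_1,comm_ring_1}^'n^'n) j =
   of_real (sum_principal_minors M j)"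
  unfolding sum_principal_minors_def by (simp add: principal_minor_of_real_matrix)

lemma det_of_real_matrix:
  "det (of_real_matrix M :: 'a::{real_algebra_1,comm_ring_1}^'n^'n) = of_real (det M)"
  unfolding det_def of_real_matrix_def by (simp add: of_real_prod)

lemma of_real_matrix_charmat: "of_real_matrix (mat x - M) = mat (of_real x) - of_real_matrix M"
  unfolding of_real_matrix_def by (simp add: vec_eq_iff mat_def)

lemma of_real_matrix_mult: "of_real_matrix (M ** N) = of_real_matrix M ** of_real_matrix N"
  unfolding of_real_matrix_def by (simp add: matrix_matrix_mult_def vec_eq_iff)

lemma mat_mult_vector: "mat c *v x = c *s x"
  by (simp add: vec_eq_iff matrix_vector_mult_def mat_def if_distrib if_distribR sum.delta cong: if_cong)

lemma mat_matrix_mult_nth: "(mat c ** X) $ i $ j = c * X $ i $ j"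
  by (simp add: matrix_matrix_mult_def mat_def if_distrib if_distribR cong: if_cong)

lemma matrix_mat_mult_nth: "(X ** mat c) $ i $ j = X $ i $ j * (c::'a::comm_semiring_1)"
  by (simp add: matrix_matrix_mult_def mat_def if_distrib if_distribR cong: if_cong)

lemma charmat_mult_charmat:
  fixes X :: "'a::comm_ring_1^'n^'n"
  shows "(mat z - X) ** (mat w - X) = (\<chi> i j. (if i = j then z * w else 0) - (z + w) * X $ i $ j + (X ** X) $ i $ j)"
proof -
  have "(mat z - X) ** (mat w - X) = mat z ** mat w - mat z ** X - X ** mat w + X ** X"
    by (simp add: matrix_matrix_mult_def vec_eq_iff algebra_simps sum.distrib sum_subtractf)
  then show ?thesis
    by (simp add: vec_eq_iff mat_matrix_mult_nth matrix_mat_mult_nth algebra_simps) (simp add: mat_def)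
qed

lemma inner_symmetric_matrix:
  fixes N :: "real^'n^'n"
  assumes "transpose N = N"
  shows "x \<bullet> (N *v y) = (N *v x) \<bullet> y"
  by (metis assms dot_lmul_matrix transpose_matrix_vector)

text \<open>For \<open>z = a + ib\<close>, \<open>(z - M)(z\<^sup>* - M) = (a - M)\<^sup>2 + b\<^sup>2\<close> is positive definite when \<open>b \<noteq> 0\<close>.\<close>

lemma det_charmat_nonzero:
  fixes M :: "real^'n^'n"
  assumes sym: "transpose M = M" and im: "Im z \<noteq> 0"
  shows "det (mat z - of_real_matrix M) \<noteq> 0"
proof -
  define N where "N = mat (Re z) - M"
  define R where "R = N ** N + mat ((Im z)\<^sup>2)"
  have symN: "transpose N = N" using sym unfolding N_def
    by (simp add: transpose_def vec_eq_iff mat_def)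
  have "x = 0" if Rx: "R *v x = 0" for x
  proof -
    have "0 = x \<bullet> (R *v x)" using Rx by simp
    also have "\<dots> = (N *v x) \<bullet> (N *v x) + (Im z)\<^sup>2 * (x \<bullet> x)"
      unfolding R_def
      by (simp add: matrix_vector_mult_add_rdistrib flip: matrix_vector_mul_assoc)
         (simp add: mat_mult_vector scalar_mult_eq_scaleR inner_add_right inner_symmetric_matrix[OF symN])
    finally have "(N *v x) \<bullet> (N *v x) + (Im z)\<^sup>2 * (x \<bullet> x) = 0" by simp
    moreover have "(Im z)\<^sup>2 > 0" using im by simp
    ultimately have "x \<bullet> x = 0"
      by (smt (verit) inner_ge_zero mult_pos_pos)
    then show "x = 0" by simp
  qed
  then have "det R \<noteq> 0"
    using invertible_det_nz invertible_left_inverse matrix_left_invertible_ker by blast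
  have "(mat z - of_real_matrix M) ** (mat (cnj z) - of_real_matrix M) = of_real_matrix R"
    unfolding charmat_mult_charmat R_def N_def of_real_matrix_mult[symmetric]
    by (simp add: vec_eq_iff of_real_matrix_def mat_def charmat_mult_charmat complex_eq_iff
        power2_eq_square algebra_simps)
  then have "det (mat z - of_real_matrix M) * det (mat (cnj z) - of_real_matrix M) \<noteq> 0"
    using \<open>det R \<noteq> 0\<close> by (simp flip: det_mul add: det_of_real_matrix)
  then show ?thesis by auto
qed

lemma det_charmat_complex_roots:
  fixes M :: "real^'n^'n"
  obtains zs :: "complex list" where "length zs = CARD('n)"
    and "\<And>z. det (mat z - of_real_matrix M) = (\<Prod>w\<leftarrow>zs. z - w)"
proof -
  define P :: "complex poly" where
    "P = (\<Sum>i\<le>CARD('n). monom (of_real ((-1) ^ (CARD('n) - i) * sum_principal_minors M (CARD('n) - i))) i)"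
  have poly_P: "poly P z = det (mat z - of_real_matrix M)" for z
    unfolding P_def det_charmat_coeffs poly_sum poly_monom sum_principal_minors_of_real_matrix by simp
  have coeff_P: "coeff P i = (if i \<le> CARD('n) then
      of_real ((-1) ^ (CARD('n) - i) * sum_principal_minors M (CARD('n) - i)) else 0)" for i
    unfolding P_def coeff_sum by (simp add: sum.delta)
  have "degree P = CARD('n)"
    by (intro antisym degree_le le_degree) (simp_all add: coeff_P sum_principal_minors_0)
  then have monic: "lead_coeff P = 1" by (simp add: coeff_P sum_principal_minors_0)
  obtain zs where zs: "mset zs = proots P" using ex_mset by blast
  have "P = (\<Prod>w\<in>#proots P. [:-w, 1:])"
    using complex_poly_decompose_multiset[of P] monic by simp
  then have "poly P z = (\<Prod>w\<leftarrow>zs. z - w)" for z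
    by (simp flip: zs add: poly_prod_mset) (metis mset_map prod_mset_prod_list)
  moreover have "length zs = CARD('n)"
    using size_proots_complex[of P] \<open>degree P = CARD('n)\<close> zs by (metis size_mset)
  ultimately show ?thesis using that poly_P by simp
qed

lemma charpoly_sorted_real_roots:
  fixes M :: "real^'n^'n"
  assumes sym: "transpose M = M"
  shows "\<exists>ls. length ls = CARD('n) \<and> sorted_wrt (\<ge>) ls \<and>
    (\<forall>x. det (mat x - M) = (\<Prod>i<CARD('n). x - ls ! i))"
proof -
  obtain zs :: "complex list" where len: "length zs = CARD('n)"
    and roots: "\<And>z. det (mat z - of_real_matrix M) = (\<Prod>w\<leftarrow>zs. z - w)"
    using det_charmat_complex_roots[of M] by blast
  have real: "Im w = 0" if "w \<in> set zs" for w
    using det_charmat_nonzero[OF sym, of w] that by (auto simp: roots prod_list_zero_iff)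
  define ls where "ls = rev (sort (map Re zs))"
  have "det (mat x - M) = (\<Prod>i<CARD('n). x - ls ! i)" for x
  proof -
    have "(of_real (det (mat x - M)) :: complex) = (\<Prod>w\<leftarrow>zs. of_real x - w)"
      by (simp flip: roots det_of_real_matrix add: of_real_matrix_charmat)
    also have "\<dots> = of_real (\<Prod>r\<leftarrow>map Re zs. x - r)"
      using real by (induction zs) (auto simp: complex_eq_iff)
    finally have "det (mat x - M) = (\<Prod>r\<leftarrow>map Re zs. x - r)"
      using of_real_eq_iff by blast
    also have "\<dots> = (\<Prod>r\<leftarrow>ls. x - r)"
      by (simp add: ls_def image_mset.compositionality flip: prod_mset_prod_list)
    also have "\<dots> = (\<Prod>i<CARD('n). x - ls ! i)"
      using len by (simp add: prod.list_conv_set_nth atLeast0LessThan ls_def)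
    finally show ?thesis .
  qed
  then show ?thesis
    using len by (intro exI[of _ ls]) (simp add: ls_def sorted_wrt_rev)
qed

lemma proots_prod_linear: "proots (\<Prod>r\<leftarrow>l. [:-r, 1:]) = mset (l :: 'a::idom list)"
proof (induction l)
  case (Cons a l)
  have "(\<Prod>r\<leftarrow>l. [:-r, 1:]) \<noteq> 0" by (auto simp: prod_list_zero_iff)
  then have "proots ([:-a, 1:] * (\<Prod>r\<leftarrow>l. [:-r, 1:])) = proots [:-a, 1:] + proots (\<Prod>r\<leftarrow>l. [:-r, 1:])"
    by (intro proots_mult) auto
  then show ?case using Cons by simp
qed simp

lemma sorted_desc_eq_if_prod_diff_eq:
  fixes l1 l2 :: "'a::linordered_idom list"
  assumes len: "length l1 = n" "length l2 = n" and sorted: "sorted_wrt (\<ge>) l1" "sorted_wrt (\<ge>) l2"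
    and eq: "\<And>x. (\<Prod>i<n. x - l1 ! i) = (\<Prod>i<n. x - l2 ! i)"
  shows "l1 = l2"
proof -
  have "poly (\<Prod>r\<leftarrow>l. [:-r, 1:]) x = (\<Prod>i<length l. x - l ! i)" for l :: "'a list" and x
    by (simp add: poly_prod_list o_def prod.list_conv_set_nth atLeast0LessThan poly_prod)
  then have "poly (\<Prod>r\<leftarrow>l1. [:-r, 1:]) = poly (\<Prod>r\<leftarrow>l2. [:-r, 1:])"
    using eq len by auto
  then have "(\<Prod>r\<leftarrow>l1. [:-r, 1:]) = (\<Prod>r\<leftarrow>l2. [:-r, 1:])"
    by (simp add: poly_eq_poly_eq_iff)
  then have "mset (rev l1) = mset (rev l2)"
    by (metis proots_prod_linear mset_rev)
  then have "sort (rev l2) = rev l1"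
    using sorted by (intro properties_for_sort) (auto simp: sorted_wrt_rev)
  moreover have "sort (rev l2) = rev l2"
    using sorted by (simp add: sorted_wrt_rev sorted_sort_id)
  ultimately show ?thesis by simp
qed

lemma eigs:
  fixes M :: "real^'n^'n"
  assumes "transpose M = M"
  shows "length (eigs M) = CARD('n)" and "sorted_wrt (\<ge>) (eigs M)"
    and "\<And>x. det (mat x - M) = (\<Prod>i<CARD('n). x - eigs M ! i)"
proof -
  have "\<exists>!ls. length ls = CARD('n) \<and> sorted_wrt (\<ge>) ls \<and>
      (\<forall>x. det (mat x - M) = (\<Prod>i<CARD('n). x - ls ! i))"
    using charpoly_sorted_real_roots[OF assms] sorted_desc_eq_if_prod_diff_eq[of _ "CARD('n)"]
    by (smt (verit))
  then have "length (eigs M) = CARD('n) \<and> sorted_wrt (\<ge>) (eigs M) \<and>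
      (\<forall>x. det (mat x - M) = (\<Prod>i<CARD('n). x - eigs M ! i))"
    unfolding eigs_def by (rule theI')
  then show "length (eigs M) = CARD('n)" and "sorted_wrt (\<ge>) (eigs M)"
    and "\<And>x. det (mat x - M) = (\<Prod>i<CARD('n). x - eigs M ! i)" by auto
qed

lemma sorted_wrt_ge_nth_mono:
  fixes l :: "'a::linorder list"
  assumes "sorted_wrt (\<ge>) l" "i \<le> j" "j < length l"
  shows "l ! j \<le> l ! i"
  using assms sorted_wrt_nth_less[of "(\<ge>)" l i j] by (cases "i = j") auto

lemma psd_quadratic_form_zero:
  fixes N :: "real^'n^'n"
  assumes sym: "transpose N = N" and psd: "\<And>v. 0 \<le> v \<bullet> (N *v v)" and zero: "u \<bullet> (N *v u) = 0"
  shows "N *v u = 0"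
proof -
  define w where "w = N *v u"
  define c where "c = w \<bullet> (N *v w)"
  have c: "0 \<le> c" unfolding c_def by (rule psd)
  have Nu: "N *v u = w" and uNw: "u \<bullet> (N *v w) = w \<bullet> w"
    using inner_symmetric_matrix[OF sym, of u w] by (simp_all add: w_def)
  have quad: "0 \<le> 2 * t * (w \<bullet> w) + t\<^sup>2 * c" for t
  proof -
    have "0 \<le> (u + t *\<^sub>R w) \<bullet> (N *v (u + t *\<^sub>R w))" by (rule psd)
    also have "\<dots> = 2 * t * (w \<bullet> w) + t\<^sup>2 * c"
      using zero Nu uNw
      by (simp add: c_def matrix_vector_right_distrib matrix_vector_mult_scaleR inner_add_left
          inner_add_right inner_commute power2_eq_square algebra_simps)
    finally show ?thesis .
  qed
  have "w \<bullet> w = 0"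
  proof (rule ccontr)
    assume "w \<bullet> w \<noteq> 0"
    then have q: "0 < w \<bullet> w" by simp
    define e where "e = (w \<bullet> w) / (c + 1)"
    have e: "0 < e" unfolding e_def using q c by simp
    have "e * (2 * (w \<bullet> w)) \<le> e * (e * c)"
      using quad[of "- e"] by (simp add: power2_eq_square algebra_simps)
    then have "2 * (w \<bullet> w) \<le> e * c" using e by simp
    also have "e * c < w \<bullet> w" unfolding e_def using q c by (simp add: field_simps)
    finally show False using q by simp
  qed
  then show ?thesis unfolding w_def by simp
qed

lemma quadratic_form_ge_min_eig:
  fixes M :: "real^'n^'n"
  assumes sym: "transpose M = M"
  shows "eigs M ! (CARD('n) - 1) * (x \<bullet> x) \<le> x \<bullet> (M *v x)"
proof -
  define f where "f u = u \<bullet> (M *v u)" for u :: "real^'n"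
  have "continuous_on (sphere 0 1) f"
    unfolding f_def by (intro continuous_intros continuous_on_compose2[OF matrix_vector_mult_linear_continuous_on[of UNIV M]]) auto
  moreover have "axis undefined 1 \<in> sphere (0::real^'n) 1" by (simp add: norm_axis_1)
  ultimately obtain u0 where u0: "u0 \<in> sphere 0 1" and min: "\<And>y. y \<in> sphere 0 1 \<Longrightarrow> f u0 \<le> f y"
    using continuous_attains_inf[OF compact_sphere] by blast
  define \<mu> where "\<mu> = f u0"
  have ge_\<mu>: "\<mu> * (v \<bullet> v) \<le> v \<bullet> (M *v v)" for v
  proof (cases "v = 0")
    case False
    have "\<mu> \<le> f ((1 / norm v) *\<^sub>R v)" unfolding \<mu>_def using False by (intro min) simp
    also have "\<dots> = (v \<bullet> (M *v v)) / (v \<bullet> v)"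
      by (simp add: f_def power2_norm_eq_inner[symmetric] matrix_vector_mult_scaleR power2_eq_square)
    finally show ?thesis using False by (simp add: field_simps)
  qed simp
  \<comment> \<open>\<open>\<mu>\<close> is an eigenvalue: \<open>u0\<close> is a zero of the positive semidefinite form of \<open>M - \<mu>\<close>\<close>
  define N where "N = M - mat \<mu>"
  have Nv: "N *v v = M *v v - \<mu> *\<^sub>R v" for v
    unfolding N_def by (simp add: matrix_vector_mult_diff_rdistrib mat_mult_vector scalar_mult_eq_scaleR)
  have "transpose N = N" using sym unfolding N_def by (simp add: transpose_def vec_eq_iff mat_def)
  moreover have "0 \<le> v \<bullet> (N *v v)" for v using ge_\<mu>[of v] by (simp add: Nv inner_diff_right)
  moreover have "u0 \<bullet> (N *v u0) = 0"
    using u0 by (simp add: Nv \<mu>_def f_def inner_diff_right flip: power2_norm_eq_inner)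
  ultimately have "N *v u0 = 0" by (rule psd_quadratic_form_zero)
  then have "(mat \<mu> - M) *v u0 = 0"
    by (simp add: matrix_vector_mult_diff_rdistrib mat_mult_vector scalar_mult_eq_scaleR Nv)
  moreover have "u0 \<noteq> 0" using u0 by auto
  ultimately have "det (mat \<mu> - M) = 0"
    using invertible_det_nz invertible_left_inverse matrix_left_invertible_ker by blast
  then obtain i where i: "i < CARD('n)" "\<mu> = eigs M ! i" by (auto simp: eigs(3)[OF sym])
  then have "eigs M ! (CARD('n) - 1) \<le> \<mu>"
    using eigs(1,2)[OF sym] sorted_wrt_ge_nth_mono[of "eigs M" i "CARD('n) - 1"] by simp
  then have "eigs M ! (CARD('n) - 1) * (x \<bullet> x) \<le> \<mu> * (x \<bullet> x)"
    by (simp add: mult_right_mono)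
  then show ?thesis using ge_\<mu>[of x] by linarith
qed

section \<open>Gram determinants and projection residuals\<close>

lemma gram_det_eq_principal_minor: "gram_det A S = principal_minor (transpose A ** A) S"
  unfolding gram_det_def principal_minor_def matrix_mult_transpose_dot_column by simp

lemma transpose_gram_matrix: "transpose (transpose A ** A) = transpose A ** (A :: 'a::comm_semiring_1^'n^'m)"
  by (simp add: matrix_transpose_mul)

lemma principal_minor_cong:
  assumes "\<And>i l. i \<in> S \<Longrightarrow> l \<in> S \<Longrightarrow> M $ i $ l = N $ i $ l"
  shows "principal_minor M S = principal_minor N S"
  unfolding principal_minor_def
  using assms by (intro sum.cong refl arg_cong2[where f = "(*)"] prod.cong) (auto simp: permutes_in_image)

definition pad_identity :: "'n set \<Rightarrow> 'a::zero_neq_one^'n^'n \<Rightarrow> 'a^'n^'n" where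
  "pad_identity T M = (\<chi> i l. if i \<in> T \<and> l \<in> T then M $ i $ l else if i = l then 1 else 0)"

lemma det_pad_identity: "det (pad_identity T M) = principal_minor M T"
proof -
  have "of_int (sign p) * (\<Prod>i\<in>UNIV. pad_identity T M $ i $ p i) =
      (if p permutes T then of_int (sign p) * (\<Prod>i\<in>T. M $ i $ p i) else 0)"
    if p: "p permutes UNIV" for p
  proof (cases "p permutes T")
    case True
    have "(\<Prod>i\<in>UNIV. pad_identity T M $ i $ p i) =
        (\<Prod>i\<in>T. pad_identity T M $ i $ p i) * (\<Prod>i\<in>- T. pad_identity T M $ i $ p i)"
      by (simp add: prod.subset_diff[of T UNIV] Compl_eq_Diff_UNIV mult.commute)
    also have "\<dots> = (\<Prod>i\<in>T. M $ i $ p i)"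
      using True by (simp add: pad_identity_def permutes_in_image permutes_not_in)
    finally show ?thesis using True by simp
  next
    case False
    then obtain i where "i \<notin> T" "p i \<noteq> i" using p unfolding permutes_def by blast
    then have "(\<Prod>i\<in>UNIV. pad_identity T M $ i $ p i) = 0"
      by (intro prod_zero) (auto simp: pad_identity_def intro!: bexI[of _ i])
    then show ?thesis using False by simp
  qed
  then have "det (pad_identity T M) = (\<Sum>p\<in>{p. p permutes UNIV}.
      if p permutes T then of_int (sign p) * (\<Prod>i\<in>T. M $ i $ p i) else 0)"
    unfolding det_def by (intro sum.cong) auto
  also have "\<dots> = principal_minor M T"
    unfolding principal_minor_def
    by (rule sum.mono_neutral_cong_right) (auto simp: finite_permutations permutes_subset)
  finally show ?thesis .
qed

lemma principal_minor_insert_zero_row: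
  assumes j: "j \<notin> S" and zero: "\<And>l. l \<in> S \<Longrightarrow> M $ j $ l = 0"
  shows "principal_minor M (insert j S) = M $ j $ j * principal_minor M S"
proof -
  have "principal_minor M (insert j S) = (\<Sum>p\<in>{p. p permutes insert j S}.
      if p j = j then M $ j $ j * (of_int (sign p) * (\<Prod>i\<in>S. M $ i $ p i)) else 0)"
    unfolding principal_minor_def
  proof (intro sum.cong refl)
    fix p assume "p \<in> {p. p permutes insert j S}"
    then have "p j \<in> insert j S" using permutes_in_image[of p "insert j S" j] by simp
    then show "of_int (sign p) * (\<Prod>i\<in>insert j S. M $ i $ p i) =
        (if p j = j then M $ j $ j * (of_int (sign p) * (\<Prod>i\<in>S. M $ i $ p i)) else 0)"
      using j zero by (auto simp: prod.insert)
  qed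
  also have "\<dots> = (\<Sum>p\<in>{p. p permutes insert j S \<and> p j = j}. M $ j $ j * (of_int (sign p) * (\<Prod>i\<in>S. M $ i $ p i)))"
    by (subst sum.inter_filter[symmetric]) (auto simp: finite_permutations intro!: sum.cong)
  also have "{p. p permutes insert j S \<and> p j = j} = {p. p permutes S}"
    using j by (auto simp: permutes_def)
  finally show ?thesis by (simp add: principal_minor_def sum_distrib_left)
qed

lemma closest_point_subspace:
  fixes V :: "'a::euclidean_space set"
  assumes "subspace V"
  shows "closest_point V a \<in> V" and "v \<in> V \<Longrightarrow> (a - closest_point V a) \<bullet> v = 0"
proof -
  have V: "closed V" "V \<noteq> {}" "convex V"
    using assms closed_subspace subspace_0 subspace_imp_convex by blast+
  show P: "closest_point V a \<in> V" by (rule closest_point_in_set[OF V(1,2)])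
  assume v: "v \<in> V"
  have "(a - closest_point V a) \<bullet> v \<le> 0"
    using closest_point_dot[OF V(3,1), of "closest_point V a + v" a] P v assms
    by (simp add: subspace_add)
  moreover have "(a - closest_point V a) \<bullet> v \<ge> 0"
    using closest_point_dot[OF V(3,1), of "closest_point V a - v" a] P v assms
    by (simp add: subspace_diff)
  ultimately show "(a - closest_point V a) \<bullet> v = 0" by simp
qed

definition proj_residual :: "real^'n^'m \<Rightarrow> 'n set \<Rightarrow> 'n \<Rightarrow> real^'m" where
  "proj_residual A S j = column j A - projS A S (column j A)"

lemma proj_residual_orthogonal:
  "v \<in> span ((\<lambda>i. column i A) ` S) \<Longrightarrow> proj_residual A S j \<bullet> v = 0"
  unfolding proj_residual_def projS_def by (rule closest_point_subspace(2)) simp_all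

lemma column_minus_proj_residual: "column j A - proj_residual A S j \<in> span ((\<lambda>i. column i A) ` S)"
  unfolding proj_residual_def projS_def by (simp add: closest_point_subspace(1))

lemma proj_residual_eq_0: "j \<in> S \<Longrightarrow> proj_residual A S j = 0"
  unfolding proj_residual_def projS_def by (simp add: closest_point_self span_base)

lemma Er_eq_sum_proj_residual: "Er A S = (\<Sum>j\<in>UNIV. (norm (proj_residual A S j))\<^sup>2)"
  unfolding Er_def frob2_def proj_residual_def power2_norm_eq_inner inner_vec_def
  by (subst sum.swap) (simp add: power2_eq_square column_def)

lemma gram_det_reduce_row:
  fixes A :: "real^'n^'m"
  assumes j: "j \<notin> S" and r: "column j A - r \<in> span ((\<lambda>i. column i A) ` S)"
  shows "principal_minor (\<chi> i l. if i = j then r \<bullet> column l A else column i A \<bullet> column l A) (insert j S) =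
    gram_det A (insert j S)"
proof -
  define a where "a i = column i A" for i
  define T where "T = insert j S"
  define G where "G = pad_identity T (transpose A ** A)"
  define L where "L v = (\<chi> l. if l \<in> T then v \<bullet> a l else 0)" for v
  have "linear L"
    unfolding L_def by (rule linearI) (auto simp: vec_eq_iff inner_add_left)
  have row_G: "row i G = L (a i)" if "i \<in> T" for i
    using that unfolding G_def L_def a_def
    by (auto simp: vec_eq_iff row_def pad_identity_def matrix_mult_transpose_dot_column)
  have "L (a j - r) \<in> span (L ` a ` S)"
    using r span_linear_image[OF \<open>linear L\<close>, of "a ` S"] unfolding a_def by auto
  also have "span (L ` a ` S) \<subseteq> vec.span {row l G | l. l \<noteq> j}"
    unfolding span_vec_eq using j row_G[symmetric] by (intro span_mono) (auto simp: T_def)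
  finally have span: "- L (a j - r) \<in> vec.span {row l G | l. l \<noteq> j}"
    by (simp add: vec.span_neg)
  have "row j G + - L (a j - r) = L r"
    using row_G[of j] linear_diff[OF \<open>linear L\<close>] by (simp add: T_def)
  moreover have "(\<chi> k. if k = j then L r else row k G) =
      pad_identity T (\<chi> i l. if i = j then r \<bullet> a l else a i \<bullet> a l)"
    unfolding G_def L_def a_def
    by (auto simp: vec_eq_iff row_def pad_identity_def matrix_mult_transpose_dot_column T_def)
  ultimately have "principal_minor (\<chi> i l. if i = j then r \<bullet> a l else a i \<bullet> a l) T =
      det (\<chi> k. if k = j then row j G + - L (a j - r) else row k G)"
    by (simp add: det_pad_identity cong: if_cong)
  also have "\<dots> = det G"
    using span by (rule det_row_span)
  also have "\<dots> = gram_det A T"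
    by (simp add: G_def det_pad_identity gram_det_eq_principal_minor)
  finally show ?thesis unfolding T_def a_def .
qed

text \<open>Base times height: after the row operation above with \<open>r = a\<^sub>j - P\<^sub>S a\<^sub>j\<close>, row \<open>j\<close> is
  orthogonal to the columns in \<open>S\<close>, so the minor factors, and \<open>r \<bullet> a\<^sub>j = \<parallel>r\<parallel>\<^sup>2\<close>.\<close>

lemma gram_det_insert:
  fixes A :: "real^'n^'m"
  assumes j: "j \<notin> S"
  shows "gram_det A (insert j S) = gram_det A S * (norm (proj_residual A S j))\<^sup>2"
proof -
  define a where "a i = column i A" for i
  define r where "r = proj_residual A S j"
  define M' where "M' = (\<chi> i l. if i = j then r \<bullet> a l else a i \<bullet> a l)"
  have r_orth: "r \<bullet> v = 0" if "v \<in> span (a ` S)" for v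
    using that proj_residual_orthogonal unfolding r_def a_def by blast
  have proj: "a j - r \<in> span (a ` S)"
    using column_minus_proj_residual unfolding r_def a_def by blast
  have "gram_det A (insert j S) = principal_minor M' (insert j S)"
    using gram_det_reduce_row[OF j proj[unfolded a_def]] unfolding M'_def a_def by simp
  also have "\<dots> = M' $ j $ j * principal_minor M' S"
    using j r_orth by (intro principal_minor_insert_zero_row) (auto simp: M'_def span_base)
  also have "principal_minor M' S = gram_det A S"
    unfolding gram_det_eq_principal_minor using j
    by (intro principal_minor_cong) (auto simp: M'_def a_def matrix_mult_transpose_dot_column)
  also have "M' $ j $ j = r \<bullet> r + r \<bullet> (a j - r)"
    by (simp add: M'_def inner_diff_right)
  also have "\<dots> = (norm r)\<^sup>2"
    using r_orth[OF proj] by (simp add: power2_norm_eq_inner)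
  finally show ?thesis unfolding r_def by (simp add: mult.commute)
qed

lemma sum_subsets_insert_swap:
  assumes N: "finite N"
  shows "(\<Sum>S\<in>{S. S \<subseteq> N \<and> card S = k}. \<Sum>j\<in>N - S. h S j) =
         (\<Sum>U\<in>{U. U \<subseteq> N \<and> card U = Suc k}. \<Sum>j\<in>U. h (U - {j}) j)"
proof -
  have "(\<Sum>S\<in>{S. S \<subseteq> N \<and> card S = k}. \<Sum>j\<in>N - S. h S j) =
        (\<Sum>(S, j)\<in>Sigma {S. S \<subseteq> N \<and> card S = k} (\<lambda>S. N - S). h S j)"
    using N by (intro sum.Sigma) auto
  also have "\<dots> = (\<Sum>(U, j)\<in>Sigma {U. U \<subseteq> N \<and> card U = Suc k} (\<lambda>U. U). h (U - {j}) j)"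
    by (rule sum.reindex_bij_witness[of _ "\<lambda>(U, j). (U - {j}, j)" "\<lambda>(S, j). (insert j S, j)"])
       (auto simp: N finite_subset card_insert_if card_Diff_singleton_if)
  also have "\<dots> = (\<Sum>U\<in>{U. U \<subseteq> N \<and> card U = Suc k}. \<Sum>j\<in>U. h (U - {j}) j)"
    using N by (intro sum.Sigma[symmetric]) (auto simp: finite_subset)
  finally show ?thesis .
qed

lemma gram_det_mult_Er:
  "gram_det A S * Er A S = (\<Sum>j\<in>- S. gram_det A (insert j S))"
proof -
  have "gram_det A S * Er A S = (\<Sum>j\<in>- S. gram_det A S * (norm (proj_residual A S j))\<^sup>2)"
    unfolding Er_eq_sum_proj_residual sum_distrib_left
    by (intro sum.mono_neutral_right) (auto simp: proj_residual_eq_0)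
  then show ?thesis by (simp add: gram_det_insert)
qed

lemma sum_gram_det_mult_Er:
  fixes A :: "real^'n^'m"
  shows "(\<Sum>S\<in>{S. card S = k}. gram_det A S * Er A S) =
    real (Suc k) * (\<Sum>U\<in>{U. card U = Suc k}. gram_det A U)"
proof -
  have "(\<Sum>S\<in>{S. card S = k}. gram_det A S * Er A S) =
      (\<Sum>S\<in>{S. S \<subseteq> UNIV \<and> card S = k}. \<Sum>j\<in>UNIV - S. gram_det A (insert j S))"
    by (simp add: gram_det_mult_Er Compl_eq_Diff_UNIV)
  also have "\<dots> = (\<Sum>U\<in>{U. U \<subseteq> UNIV \<and> card U = Suc k}. \<Sum>j\<in>U. gram_det A (insert j (U - {j})))"
    by (rule sum_subsets_insert_swap) simp
  also have "\<dots> = (\<Sum>U\<in>{U. card U = Suc k}. real (Suc k) * gram_det A U)"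
    by (intro sum.cong) (auto simp: insert_absorb)
  finally show ?thesis by (simp add: sum_distrib_left)
qed

lemma sum_gram_det_eq_esym:
  fixes A :: "real^'n^'m"
  assumes "j \<le> CARD('n)"
  shows "(\<Sum>S\<in>{S. card S = j}. gram_det A S) = esym (eigs (transpose A ** A)) j"
  using assms eigs[OF transpose_gram_matrix[of A]] sum_principal_minors_eq_esym
  unfolding sum_principal_minors_def gram_det_eq_principal_minor by blast

lemma dpp_expected_Er_eq_esym:
  fixes A :: "real^'n^'m"
  assumes "k < CARD('n)"
  shows "dpp_expected_Er A k =
    real (Suc k) * esym (eigs (transpose A ** A)) (Suc k) / esym (eigs (transpose A ** A)) k"
  using assms
  by (simp add: dpp_expected_Er_def sum_gram_det_mult_Er sum_gram_det_eq_esym)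

section \<open>An inequality between consecutive elementary symmetric polynomials\<close>

lemma card_le_card_ge_plus:
  fixes U :: "nat set"
  assumes "finite U"
  shows "card U \<le> s + card {j\<in>U. s \<le> j}"
proof -
  have "card U \<le> card {j\<in>U. j < s} + card {j\<in>U. s \<le> j}"
    by (rule order.trans[OF card_mono card_Un_le]) (auto simp: assms)
  moreover have "card {j\<in>U. j < s} \<le> s"
    using card_mono[of "{..<s}" "{j\<in>U. j < s}"] by auto
  ultimately show ?thesis by linarith
qed

lemma esym_pos:
  fixes l :: "'a::linordered_semidom list"
  assumes "\<And>i. i < length l \<Longrightarrow> 0 < l ! i" and "k \<le> length l"
  shows "0 < esym l k"
  unfolding esym_def
proof (rule sum_pos)
  show "{T. T \<subseteq> {..<length l} \<and> card T = k} \<noteq> {}"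
    using assms(2) by (auto intro!: exI[of _ "{..<k}"])
qed (use assms(1) in \<open>auto intro: prod_pos\<close>)

text \<open>Indices are 0-based, so \<open>l ! s\<close> is \<open>\<lambda>\<^sub>s\<^sub>+\<^sub>1\<close>. A \<open>(k+1)\<close>-subset \<open>U\<close> of \<open>{..<n}\<close> has at
  least \<open>k + 1 - s\<close> elements \<open>j \<ge> s\<close>, and removing such a \<open>j\<close> from \<open>U\<close> trades a factor
  \<open>l ! j \<le> l ! s\<close> for a \<open>k\<close>-subset; each \<open>k\<close>-subset arises from at most \<open>n - k\<close> such pairs.\<close>

lemma esym_Suc_le:
  fixes l :: "real list"
  assumes sorted: "sorted_wrt (\<ge>) l" and nonneg: "\<And>i. i < length l \<Longrightarrow> 0 \<le> l ! i"
    and s: "s < length l"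
  shows "real (Suc k - s) * esym l (Suc k) \<le> real (length l - k) * l ! s * esym l k"
proof -
  define N where "N = {..<length l}"
  define w where "w U = (\<Prod>i\<in>U. l ! i)" for U
  define h where "h S j = (if s \<le> j then w S * l ! j else 0)" for S j
  have w: "0 \<le> w U" if "U \<subseteq> N" for U
    unfolding w_def using that nonneg by (intro prod_nonneg) (auto simp: N_def)
  have "real (Suc k - s) * esym l (Suc k) = (\<Sum>U\<in>{U. U \<subseteq> N \<and> card U = Suc k}. real (Suc k - s) * w U)"
    unfolding esym_def N_def w_def by (simp add: sum_distrib_left)
  also have "\<dots> \<le> (\<Sum>U\<in>{U. U \<subseteq> N \<and> card U = Suc k}. \<Sum>j\<in>U. h (U - {j}) j)"
  proof (rule sum_mono)
    fix U assume U: "U \<in> {U. U \<subseteq> N \<and> card U = Suc k}"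
    then have "finite U" by (auto simp: N_def finite_subset)
    then have "(\<Sum>j\<in>U. h (U - {j}) j) = (\<Sum>j\<in>U. if s \<le> j then w U else 0)"
      by (intro sum.cong) (auto simp: h_def w_def prod.remove mult.commute)
    also have "\<dots> = real (card {j\<in>U. s \<le> j}) * w U"
      using \<open>finite U\<close> by (simp add: sum.If_cases Int_def)
    finally show "real (Suc k - s) * w U \<le> (\<Sum>j\<in>U. h (U - {j}) j)"
      using card_le_card_ge_plus[OF \<open>finite U\<close>, of s] U w[of U] by (auto intro!: mult_right_mono)
  qed
  also have "\<dots> = (\<Sum>S\<in>{S. S \<subseteq> N \<and> card S = k}. \<Sum>j\<in>N - S. h S j)"
    by (rule sum_subsets_insert_swap[symmetric]) (simp add: N_def)
  also have "\<dots> \<le> (\<Sum>S\<in>{S. S \<subseteq> N \<and> card S = k}. \<Sum>j\<in>N - S. l ! s * w S)"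
    using sorted_wrt_ge_nth_mono[OF sorted] w nonneg s
    by (intro sum_mono) (auto simp: h_def N_def mult.commute intro: mult_left_mono)
  also have "\<dots> = (\<Sum>S\<in>{S. S \<subseteq> N \<and> card S = k}. real (length l - k) * l ! s * w S)"
    by (intro sum.cong) (auto simp: N_def card_Diff_subset finite_subset)
  also have "\<dots> = real (length l - k) * l ! s * esym l k"
    unfolding esym_def N_def w_def by (simp add: sum_distrib_left)
  finally show ?thesis .
qed

section \<open>A lower bound for the best rank-\<open>k\<close> approximation error\<close>

lemma bessel_inequality:
  fixes U :: "'a::real_inner set"
  assumes "finite U" and orth: "pairwise orthogonal U" and unit: "\<And>u. u \<in> U \<Longrightarrow> norm u = 1"
  shows "(\<Sum>u\<in>U. (v \<bullet> u)\<^sup>2) \<le> (norm v)\<^sup>2"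
proof -
  define p where "p = (\<Sum>u\<in>U. (v \<bullet> u) *\<^sub>R u)"
  have "u \<bullet> p = v \<bullet> u" if "u \<in> U" for u
  proof -
    have "u \<bullet> p = (\<Sum>w\<in>U. if w = u then v \<bullet> u else 0)"
      unfolding p_def inner_sum_right using orth unit[OF that] that
      by (intro sum.cong) (auto simp: pairwise_def orthogonal_def inner_commute dot_square_norm)
    then show ?thesis using \<open>finite U\<close> that by simp
  qed
  then have "p \<bullet> p = (\<Sum>u\<in>U. (v \<bullet> u)\<^sup>2)"
    by (subst (1) p_def) (simp add: inner_sum_left power2_eq_square)
  moreover have "v \<bullet> p = (\<Sum>u\<in>U. (v \<bullet> u)\<^sup>2)"
    unfolding p_def by (simp add: inner_sum_right power2_eq_square)
  moreover have "0 \<le> (v - p) \<bullet> (v - p)" by simp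
  ultimately show ?thesis
    by (simp add: inner_diff_left inner_diff_right inner_commute power2_norm_eq_inner)
qed

lemma frob2_ge_sum_orthonormal:
  fixes C :: "real^'n^'m"
  assumes "finite U" "pairwise orthogonal U" "\<And>u. u \<in> U \<Longrightarrow> norm u = 1"
  shows "(\<Sum>u\<in>U. (norm (C *v u))\<^sup>2) \<le> frob2 C"
proof -
  have "(norm (C *v u))\<^sup>2 = (\<Sum>i\<in>UNIV. (row i C \<bullet> u)\<^sup>2)" for u
    unfolding power2_norm_eq_inner by (simp add: inner_vec_def matrix_vector_mult_def row_def power2_eq_square)
  then have "(\<Sum>u\<in>U. (norm (C *v u))\<^sup>2) = (\<Sum>i\<in>UNIV. \<Sum>u\<in>U. (row i C \<bullet> u)\<^sup>2)"
    by (simp add: sum.swap[of _ U])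
  also have "\<dots> \<le> (\<Sum>i\<in>UNIV. (norm (row i C))\<^sup>2)"
    by (intro sum_mono bessel_inequality assms)
  also have "\<dots> = frob2 C"
    unfolding power2_norm_eq_inner by (simp add: frob2_def inner_vec_def row_def power2_eq_square)
  finally show ?thesis .
qed

lemma norm_matrix_vector_mult_sq:
  fixes A :: "real^'n^'m"
  shows "(norm (A *v u))\<^sup>2 = u \<bullet> ((transpose A ** A) *v u)"
proof -
  have "u \<bullet> ((transpose A ** A) *v u) = u \<bullet> ((A *v u) v* A)"
    by (simp add: transpose_matrix_vector flip: matrix_vector_mul_assoc)
  also have "\<dots> = (A *v u) \<bullet> (A *v u)"
    by (simp only: inner_commute[of u] dot_lmul_matrix)
  finally show ?thesis by (simp add: power2_norm_eq_inner)
qed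

text \<open>A rank-\<open>k\<close> matrix \<open>B\<close> vanishes on an orthonormal family of size \<open>n - k\<close> (the
  orthogonal complement of its row space), on which \<open>A - B\<close> agrees with \<open>A\<close>.\<close>

lemma frob2_diff_ge_rank:
  fixes A B :: "real^'n^'m"
  assumes rank: "rank B = k" and ge: "\<And>x. \<mu> * (x \<bullet> x) \<le> x \<bullet> ((transpose A ** A) *v x)"
  shows "real (CARD('n) - k) * \<mu> \<le> frob2 (A - B)"
proof -
  define W where "W = {y. \<forall>x\<in>span (rows B). orthogonal x y}"
  have "dim W + dim (span (rows B)) = CARD('n)"
    using dim_subspace_orthogonal_to_vectors[of "span (rows B)" UNIV] by (simp add: W_def)
  then have dim_W: "dim W = CARD('n) - k"
    using rank by (simp add: row_rank_def)
  have "subspace W" unfolding W_def by (rule subspace_orthogonal_to_vectors)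
  then obtain U where U: "U \<subseteq> W" "pairwise orthogonal U" "\<And>x. x \<in> U \<Longrightarrow> norm x = 1"
    "independent U" "card U = dim W" "span U = W"
    using orthonormal_basis_subspace by metis
  have "finite U" using U(4) by (rule independent_imp_finite)
  have "B *v u = 0" if "u \<in> U" for u
  proof -
    have "row i B \<bullet> u = 0" for i
      using U(1) that span_base[of "row i B" "rows B"] by (auto simp: W_def rows_def orthogonal_def)
    then show ?thesis by (simp add: vec_eq_iff matrix_vector_mult_def row_def inner_vec_def)
  qed
  then have "\<mu> \<le> (norm ((A - B) *v u))\<^sup>2" if "u \<in> U" for u
    using ge[of u] U(3)[OF that] that
    by (simp add: matrix_vector_mult_diff_rdistrib norm_matrix_vector_mult_sq dot_square_norm)
  then have "(\<Sum>u\<in>U. \<mu>) \<le> (\<Sum>u\<in>U. (norm ((A - B) *v u))\<^sup>2)"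
    by (rule sum_mono)
  also have "\<dots> \<le> frob2 (A - B)"
    by (rule frob2_ge_sum_orthonormal[OF \<open>finite U\<close> U(2,3)])
  finally show ?thesis using U(5) dim_W by simp
qed

lemma ex_rank_eq:
  fixes A :: "real^'n^'m"
  assumes inj: "\<And>x. A *v x = 0 \<Longrightarrow> x = 0" and k: "k \<le> CARD('n)"
  obtains B :: "real^'n^'m" where "rank B = k"
proof -
  obtain K :: "'n set" where K: "card K = k"
    using obtain_subset_with_card_n[of k "UNIV :: 'n set"] k by auto
  define D :: "real^'n^'n" where "D = (\<chi> i j. if i = j \<and> i \<in> K then 1 else 0)"
  have D: "D *v x = (\<chi> i. if i \<in> K then x $ i else 0)" for x
    by (simp add: vec_eq_iff D_def matrix_vector_mult_def if_distrib if_distribR sum.delta cong: if_cong)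
  have range_D: "range ((*v) D) = {x. \<forall>i. i \<notin> K \<longrightarrow> x $ i = 0}"
    by (auto simp: D vec_eq_iff image_iff intro: exI[of _ "\<chi> i. _ $ i"])
  have "inj_on ((*v) A) (span (range ((*v) D)))"
    using inj by (intro inj_onI) (metis eq_iff_diff_eq_0 matrix_vector_mult_diff_distrib)
  moreover have "range ((*v) (A ** D)) = (*v) A ` range ((*v) D)"
    by (auto simp flip: matrix_vector_mul_assoc)
  ultimately have "rank (A ** D) = dim (range ((*v) D))"
    by (simp add: rank_dim_range dim_image_eq matrix_vector_mul_linear)
  also have "\<dots> = k"
    unfolding range_D dim_vec_eq[symmetric] dim_substandard_cart K ..
  finally show ?thesis by (rule that)
qed

section \<open>Expected DPP error versus the optimal rank-\<open>k\<close> error\<close>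

lemma eigs_gram_matrix:
  fixes A :: "real^'n^'m"
  shows "length (eigs (transpose A ** A)) = CARD('n)" and "sorted_wrt (\<ge>) (eigs (transpose A ** A))"
  using eigs(1,2)[OF transpose_gram_matrix[of A]] by simp_all

lemma lam_last_le_lam:
  fixes A :: "real^'n^'m"
  assumes "1 \<le> i" "i \<le> CARD('n)"
  shows "lam A (CARD('n)) \<le> lam A i"
  unfolding lam_def using assms eigs_gram_matrix[of A]
  by (intro sorted_wrt_ge_nth_mono) auto

lemma esym_eigs_gram_pos:
  fixes A :: "real^'n^'m"
  assumes "0 < lam A (CARD('n))" "j \<le> CARD('n)"
  shows "0 < esym (eigs (transpose A ** A)) j"
proof (rule esym_pos)
  fix i assume "i < length (eigs (transpose A ** A))"
  then show "0 < eigs (transpose A ** A) ! i"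
    using assms(1) lam_last_le_lam[of "Suc i" A] eigs_gram_matrix(1)[of A]
    by (simp add: lam_def)
qed (use assms(2) eigs_gram_matrix(1)[of A] in simp)

lemma OPT_ge:
  fixes A :: "real^'n^'m"
  assumes pos: "0 < lam A (CARD('n))" and k: "k \<le> CARD('n)"
  shows "real (CARD('n) - k) * lam A (CARD('n)) \<le> OPT A k"
proof -
  have ge: "lam A (CARD('n)) * (x \<bullet> x) \<le> x \<bullet> ((transpose A ** A) *v x)" for x
    using quadratic_form_ge_min_eig[OF transpose_gram_matrix] by (simp add: lam_def)
  have "x = 0" if "A *v x = 0" for x
  proof -
    have "lam A (CARD('n)) * (x \<bullet> x) \<le> 0"
      using ge[of x] that norm_matrix_vector_mult_sq[of A x] by simp
    then have "x \<bullet> x \<le> 0" using pos by (simp add: mult_le_0_iff)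
    then show "x = 0" by (metis inner_gt_zero_iff not_le)
  qed
  then obtain B :: "real^'n^'m" where "rank B = k"
    using ex_rank_eq k by blast
  then show ?thesis
    unfolding OPT_def by (intro cInf_greatest) (auto intro: frob2_diff_ge_rank[OF _ ge])
qed

lemma Suc_div_Suc_diff_le:
  assumes "s < k"
  shows "real (Suc k) / real (Suc k - s) \<le> 1 + real s / real (k - s)"
  using assms by (simp add: field_simps of_nat_diff)

lemma dpp_expected_Er_le:
  fixes A :: "real^'n^'m"
  assumes "s < k" "k < CARD('n)" "0 < lam A (CARD('n))"
  shows "dpp_expected_Er A k \<le> real (CARD('n) - k) * lam A (s + 1) * (1 + real s / real (k - s))"
proof -
  define l where "l = eigs (transpose A ** A)"
  have pos: "0 < l ! i" if "i < length l" for i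
    using that assms(3) lam_last_le_lam[of "Suc i" A] eigs_gram_matrix(1)[of A]
    by (simp add: l_def lam_def)
  have "real (Suc k - s) * esym l (Suc k) \<le> real (CARD('n) - k) * l ! s * esym l k"
    using esym_Suc_le[of l s k] pos eigs_gram_matrix[of A] assms(1,2) by (simp add: l_def less_imp_le)
  moreover have "0 < esym l k" using esym_eigs_gram_pos[of A k] assms unfolding l_def by simp
  ultimately have "esym l (Suc k) / esym l k \<le> real (CARD('n) - k) * l ! s / real (Suc k - s)"
    using assms(1) by (simp add: field_simps)
  then have "real (Suc k) * (esym l (Suc k) / esym l k) \<le>
      real (Suc k) * (real (CARD('n) - k) * l ! s / real (Suc k - s))"
    by (rule mult_left_mono) simp
  then have "dpp_expected_Er A k \<le> real (Suc k) * (real (CARD('n) - k) * l ! s / real (Suc k - s))"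
    using dpp_expected_Er_eq_esym[of k A] assms(2) by (simp add: l_def)
  also have "\<dots> = real (Suc k) / real (Suc k - s) * (real (CARD('n) - k) * l ! s)"
    by simp
  also have "\<dots> \<le> (1 + real s / real (k - s)) * (real (CARD('n) - k) * l ! s)"
    using assms pos[of s] eigs_gram_matrix(1)[of A]
    by (intro mult_right_mono Suc_div_Suc_diff_le) (simp_all add: l_def)
  finally show ?thesis by (simp add: l_def lam_def mult_ac)
qed

lemma dpp_expected_Er_div_OPT_le:
  fixes A :: "real^'n^'m"
  assumes "s < k" "k < CARD('n)" "0 < lam A (CARD('n))"
  shows "dpp_expected_Er A k / OPT A k \<le>
    lam A (s + 1) / lam A (CARD('n)) * (1 + real s / real (k - s))"
proof -
  let ?c = "real (CARD('n) - k) * lam A (CARD('n))"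
  have c: "0 < ?c" and opt: "?c \<le> OPT A k"
    using assms OPT_ge[of A k] by simp_all
  have "0 \<le> dpp_expected_Er A k"
    using assms esym_eigs_gram_pos[of A k] esym_eigs_gram_pos[of A "Suc k"]
    by (simp add: dpp_expected_Er_eq_esym)
  moreover have "0 < OPT A k * ?c"
    using c opt by (meson less_le_trans mult_pos_pos)
  ultimately have "dpp_expected_Er A k / OPT A k \<le> dpp_expected_Er A k / ?c"
    using opt by (intro divide_left_mono)
  also have "\<dots> \<le> real (CARD('n) - k) * lam A (s + 1) * (1 + real s / real (k - s)) / ?c"
    by (rule divide_right_mono[OF dpp_expected_Er_le[OF assms] less_imp_le[OF c]])
  also have "\<dots> = lam A (s + 1) / lam A (CARD('n)) * (1 + real s / real (k - s))"
    using assms(2,3) by (simp del: of_nat_diff)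
  finally show ?thesis .
qed

theorem lemma8:
  fixes A :: "real^'n^'m" and s k :: nat and \<epsilon> :: real
  assumes "s < k" and "k < CARD('n)"
    and "lam A (CARD('n)) > 0"
    and "0 < \<epsilon>" and "\<epsilon> \<le> 1/2"
  shows "dpp_expected_Er A k / OPT A k \<le>
    inverse (1 - exp (- (\<epsilon>^2 * real (min (k - s) (CARD('n) - k)) / 10))) *
    inverse (1 - \<epsilon>) *
    ((lam A (s + 1) / lam A (CARD('n))) * (1 + real s / real (k - s)))"
proof -
  let ?Psi = "(lam A (s + 1) / lam A (CARD('n))) * (1 + real s / real (k - s))"
  have "0 < \<epsilon>^2 * real (min (k - s) (CARD('n) - k)) / 10" using assms by simp
  then have "1 \<le> inverse (1 - exp (- (\<epsilon>^2 * real (min (k - s) (CARD('n) - k)) / 10)))"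
    by (simp add: one_le_inverse_iff)
  moreover have "1 \<le> inverse (1 - \<epsilon>)" using assms by (simp add: one_le_inverse_iff)
  moreover have "0 \<le> ?Psi" using assms lam_last_le_lam[of "s + 1" A] by simp
  ultimately have "?Psi \<le> inverse (1 - exp (- (\<epsilon>^2 * real (min (k - s) (CARD('n) - k)) / 10))) *
      inverse (1 - \<epsilon>) * ?Psi"
    using mult_right_mono[OF mult_mono, of 1 _ 1 _ ?Psi] by simp
  with dpp_expected_Er_div_OPT_le[OF assms(1-3)] show ?thesis by linarith
qed

end
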